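(* Let $\alpha,\beta,C,A,K,K_h,K_s>0$ be constants with $\alpha K_h>K_s$, and set $h_*=1-\frac{K_s}{\alpha K_h}>0$. For $s\ge 0$ and $\eta>0$ define \[ \hat r(\eta)=\Bigl(\frac{\beta C}{\eta}+1+\frac{\beta}{C}\eta\Bigr)^{-1},\qquad \hat v_0(\eta)=\alpha AK\eta^2-K_h, \] \[ \hat q_0(s,\eta)=\tfrac12\sqrt{\hat v_0(\eta)^2+4AK\hat r(\eta)\eta^2 s}-\tfrac12\hat v_0(\eta), \] \[ \hat f_0(s,\eta)=-\hat r(\eta)s+K_s,\qquad \hat g_0(s,\eta)=-\hat q_0(s,\eta)+K_h, \] the slow and fast components of the singular fast–slow system $\frac{ds}{dt}=\hat f_0(s,\eta)$, $\epsilon\frac{d\eta}{dt}=\hat g_0(s,\eta)$ (with $s$ slow, $\eta$ fast). Let \[ \hat{\mathcal S}_B=\{(\psi(\eta),\eta):\eta>0\},\qquad \psi(\eta)=\frac{\alpha K_h}{\hat r(\eta)}, \] which is the part of the critical manifold $\{\hat g_0=0\}$ lying in $\eta>0$. Then $\hat{\mathcal S}_B$ possesses a single fold point, namely \[ F_B=(s_B,\eta_B)=\bigl(\alpha K_h(2\beta+1),\,C\bigr), \] and this point is a generic fold point.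
   Context: For a fast–slow system $\dot x=f(x,y)$, $\epsilon\dot y=g(x,y)$ with slow variable $x$ and fast variable $y$, a point $P$ on the critical manifold $\{g=0\}$ is a fold point if $g(P)=0$ and $\partial_y g(P)=0$; it is a generic fold point if in addition $\partial_y^2 g(P)\neq 0$ and $\partial_x g(P)\neq 0$ (nondegeneracy) and $f(P)\neq 0$ (transversality of the slow flow). Here $x=s$, $y=\eta$, $f=\hat f_0$, $g=\hat g_0$. *)

theory Defs
  imports "HOL-Analysis.Analysis"
begin

definition r_hat :: "real \<Rightarrow> real \<Rightarrow> real \<Rightarrow> real" where
  "r_hat \<beta> C \<eta> = inverse (\<beta> * C / \<eta> + 1 + \<beta> / C * \<eta>)"

definition v0_hat :: "real \<Rightarrow> real \<Rightarrow> real \<Rightarrow> real \<Rightarrow> real \<Rightarrow> real" where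
  "v0_hat \<alpha> A K Kh \<eta> = \<alpha> * A * K * \<eta>^2 - Kh"

definition q0_hat :: "real \<Rightarrow> real \<Rightarrow> real \<Rightarrow> real \<Rightarrow> real \<Rightarrow> real \<Rightarrow> real \<Rightarrow> real \<Rightarrow> real" where
  "q0_hat \<alpha> \<beta> C A K Kh s \<eta> =
     sqrt ((v0_hat \<alpha> A K Kh \<eta>)^2 + 4 * A * K * r_hat \<beta> C \<eta> * \<eta>^2 * s) / 2
     - v0_hat \<alpha> A K Kh \<eta> / 2"

definition f0_hat :: "real \<Rightarrow> real \<Rightarrow> real \<Rightarrow> real \<Rightarrow> real \<Rightarrow> real" where
  "f0_hat \<beta> C Ks s \<eta> = - r_hat \<beta> C \<eta> * s + Ks"

definition g0_hat :: "real \<Rightarrow> real \<Rightarrow> real \<Rightarrow> real \<Rightarrow> real \<Rightarrow> real \<Rightarrow> real \<Rightarrow> real \<Rightarrow> real" where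
  "g0_hat \<alpha> \<beta> C A K Kh s \<eta> = - q0_hat \<alpha> \<beta> C A K Kh s \<eta> + Kh"

definition psi_B :: "real \<Rightarrow> real \<Rightarrow> real \<Rightarrow> real \<Rightarrow> real \<Rightarrow> real" where
  "psi_B \<alpha> \<beta> C Kh \<eta> = \<alpha> * Kh / r_hat \<beta> C \<eta>"

definition S_B :: "real \<Rightarrow> real \<Rightarrow> real \<Rightarrow> real \<Rightarrow> (real \<times> real) set" where
  "S_B \<alpha> \<beta> C Kh = {(psi_B \<alpha> \<beta> C Kh \<eta>, \<eta>) | \<eta>. \<eta> > 0}"

definition fold_point :: "(real \<Rightarrow> real \<Rightarrow> real) \<Rightarrow> real \<times> real \<Rightarrow> bool" where
  "fold_point g P \<longleftrightarrow> (case P of (x, y) \<Rightarrow>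
     g x y = 0 \<and> ((\<lambda>y'. g x y') has_real_derivative 0) (at y))"

definition generic_fold_point ::
  "(real \<Rightarrow> real \<Rightarrow> real) \<Rightarrow> (real \<Rightarrow> real \<Rightarrow> real) \<Rightarrow> real \<times> real \<Rightarrow> bool" where
  "generic_fold_point f g P \<longleftrightarrow> fold_point g P \<and> (case P of (x, y) \<Rightarrow>
     (\<exists>gy d2. (\<forall>\<^sub>F y' in nhds y. ((\<lambda>z. g x z) has_real_derivative gy y') (at y'))
              \<and> (gy has_real_derivative d2) (at y) \<and> d2 \<noteq> 0)
   \<and> (\<exists>gx. ((\<lambda>z. g z y) has_real_derivative gx) (at x) \<and> gx \<noteq> 0)
   \<and> f x y \<noteq> 0)"

end

theory Submission
  imports Defs
begin

(* Write q0_hat as the larger root q of q^2 + v0_hat(eta) q = A K s rho(eta), where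
   rho = r_hat eta^2 = eta^2 / R and R = 1 / r_hat = beta C / eta + 1 + beta eta / C.
   On the critical manifold q = Kh, which forces s = psi_B(eta) = alpha Kh R(eta).
   Implicit differentiation of the quadratic shows that along this curve the
   eta-derivative of g0_hat is a positive multiple of R'(eta) = beta / C - beta C / eta^2,
   so the only fold is at eta = C, where R = 2 beta + 1 and s = alpha Kh (2 beta + 1).
   There the numerator of the eta-derivative vanishes, so the second derivative is the
   derivative of that numerator over sqrt(disc), disc = v0_hat^2 + 4 A K s rho, namely
   2 alpha A K Kh beta / ((2 beta + 1) (alpha A K C^2 + Kh)) > 0; the s-derivative is
   -A K rho / sqrt(disc) < 0, and f0_hat = Ks - alpha Kh < 0. *)

definition quad_root :: "real \<Rightarrow> real \<Rightarrow> real" where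
  "quad_root a b = (sqrt (a\<^sup>2 + 4 * b) - a) / 2"

lemma two_quad_root_add: "2 * quad_root a b + a = sqrt (a\<^sup>2 + 4 * b)"
  by (simp add: quad_root_def field_simps)

lemma quad_root_eq_iff:
  assumes "2 * q + a \<ge> 0"
  shows "quad_root a b = q \<longleftrightarrow> q\<^sup>2 + a * q = b"
proof -
  have "quad_root a b = q \<longleftrightarrow> sqrt (a\<^sup>2 + 4 * b) = 2 * q + a"
    by (auto simp: quad_root_def)
  also have "\<dots> \<longleftrightarrow> a\<^sup>2 + 4 * b = (2 * q + a)\<^sup>2"
    using assms by (metis abs_of_nonneg real_sqrt_abs real_sqrt_eq_iff)
  also have "\<dots> \<longleftrightarrow> a\<^sup>2 + 4 * b = a\<^sup>2 + 4 * (q\<^sup>2 + a * q)"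
    by (simp add: power2_eq_square algebra_simps)
  also have "\<dots> \<longleftrightarrow> q\<^sup>2 + a * q = b"
    by auto
  finally show ?thesis .
qed

(* Implicit differentiation of q^2 + a q = b. *)
lemma DERIV_quad_root:
  assumes "(a has_real_derivative a') (at t)" "(b has_real_derivative b') (at t)"
    and "(a t)\<^sup>2 + 4 * b t > 0"
  shows "((\<lambda>t. quad_root (a t) (b t)) has_real_derivative
           (b' - a' * quad_root (a t) (b t)) / (2 * quad_root (a t) (b t) + a t)) (at t)"
proof -
  define q where "q = quad_root (a t) (b t)"
  have w: "sqrt ((a t)\<^sup>2 + 4 * b t) = 2 * q + a t"
    by (simp add: q_def two_quad_root_add)
  have derivative: "((\<lambda>t. quad_root (a t) (b t)) has_real_derivative
           ((2 * a t * a' + 4 * b') / (2 * sqrt ((a t)\<^sup>2 + 4 * b t)) - a') / 2) (at t)"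
    unfolding quad_root_def using assms
    by (auto intro!: derivative_eq_intros simp: power2_eq_square divide_simps)
  have "2 * q + a t > 0"
    unfolding w[symmetric] using assms(3) by simp
  then have "((2 * a t * a' + 4 * b') / (2 * sqrt ((a t)\<^sup>2 + 4 * b t)) - a') / 2
               = (b' - a' * q) / (2 * q + a t)"
    unfolding w by (simp add: field_simps)
  with derivative show ?thesis
    by (simp add: q_def)
qed

(* At a critical point of q the numerator below vanishes, so only its derivative contributes. *)
lemma DERIV_quad_root_deriv_at_critical:
  assumes "(a has_real_derivative a' t) (at t)" "(b has_real_derivative b' t) (at t)"
    and "(a' has_real_derivative a'') (at t)" "(b' has_real_derivative b'') (at t)"
    and "(a t)\<^sup>2 + 4 * b t > 0"
    and critical: "b' t = a' t * quad_root (a t) (b t)"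
  shows "((\<lambda>s. (b' s - a' s * quad_root (a s) (b s)) / (2 * quad_root (a s) (b s) + a s))
           has_real_derivative
         (b'' - a'' * quad_root (a t) (b t)) / (2 * quad_root (a t) (b t) + a t)) (at t)"
proof -
  let ?q = "\<lambda>s. quad_root (a s) (b s)"
  have q: "(?q has_real_derivative 0) (at t)"
    using DERIV_quad_root[OF assms(1,2,5)] critical by simp
  have numerator: "((\<lambda>s. b' s - a' s * ?q s) has_real_derivative b'' - a'' * ?q t) (at t)"
    by (auto intro!: derivative_eq_intros q assms(3,4))
  have denominator: "((\<lambda>s. 2 * ?q s + a s) has_real_derivative a' t) (at t)"
    by (auto intro!: derivative_eq_intros q assms(1))
  have "2 * ?q t + a t > 0" using assms(5) by (simp add: two_quad_root_add)
  then show ?thesis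
    using DERIV_divide[OF numerator denominator] critical by (simp add: power2_eq_square)
qed

definition r_hat_recip :: "real \<Rightarrow> real \<Rightarrow> real \<Rightarrow> real" where
  "r_hat_recip \<beta> C \<eta> = \<beta> * C / \<eta> + 1 + \<beta> / C * \<eta>"

definition r_hat_recip' :: "real \<Rightarrow> real \<Rightarrow> real \<Rightarrow> real" where
  "r_hat_recip' \<beta> C \<eta> = \<beta> / C - \<beta> * C / \<eta>\<^sup>2"

definition rho :: "real \<Rightarrow> real \<Rightarrow> real \<Rightarrow> real" where
  "rho \<beta> C \<eta> = \<eta>\<^sup>2 / r_hat_recip \<beta> C \<eta>"

definition rho' :: "real \<Rightarrow> real \<Rightarrow> real \<Rightarrow> real" where
  "rho' \<beta> C \<eta> =
     (2 * \<eta> * r_hat_recip \<beta> C \<eta> - \<eta>\<^sup>2 * r_hat_recip' \<beta> C \<eta>) / (r_hat_recip \<beta> C \<eta>)\<^sup>2"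

lemma r_hat_recip_pos: "\<beta> > 0 \<Longrightarrow> C > 0 \<Longrightarrow> \<eta> > 0 \<Longrightarrow> r_hat_recip \<beta> C \<eta> > 0"
  by (simp add: r_hat_recip_def add_pos_pos)

lemma r_hat_recip_at_C: "C \<noteq> 0 \<Longrightarrow> r_hat_recip \<beta> C C = 2 * \<beta> + 1"
  by (simp add: r_hat_recip_def)

lemma r_hat_recip'_at_C: "C \<noteq> 0 \<Longrightarrow> r_hat_recip' \<beta> C C = 0"
  by (simp add: r_hat_recip'_def power2_eq_square)

lemma r_hat_recip'_eq_0_iff:
  assumes "\<beta> > 0" "C > 0" "\<eta> > 0"
  shows "r_hat_recip' \<beta> C \<eta> = 0 \<longleftrightarrow> \<eta> = C"
proof -
  have "r_hat_recip' \<beta> C \<eta> = \<beta> * (\<eta>\<^sup>2 - C\<^sup>2) / (C * \<eta>\<^sup>2)"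
    using assms by (simp add: r_hat_recip'_def field_simps power2_eq_square)
  also have "\<dots> = 0 \<longleftrightarrow> \<eta>\<^sup>2 = C\<^sup>2"
    using assms by simp
  also have "\<dots> \<longleftrightarrow> \<eta> = C"
    using assms by (simp add: power2_eq_iff_nonneg)
  finally show ?thesis .
qed

lemma DERIV_r_hat_recip:
  "\<eta> \<noteq> 0 \<Longrightarrow> (r_hat_recip \<beta> C has_real_derivative r_hat_recip' \<beta> C \<eta>) (at \<eta>)"
  unfolding r_hat_recip_def[abs_def] r_hat_recip'_def
  by (cases "C = 0") (auto intro!: derivative_eq_intros simp: field_simps power2_eq_square)

lemma DERIV_r_hat_recip':
  "\<eta> \<noteq> 0 \<Longrightarrow> (r_hat_recip' \<beta> C has_real_derivative 2 * \<beta> * C / \<eta> ^ 3) (at \<eta>)"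
  unfolding r_hat_recip'_def[abs_def]
  by (auto intro!: derivative_eq_intros simp: field_simps power2_eq_square power3_eq_cube)

lemma rho_pos: "\<beta> > 0 \<Longrightarrow> C > 0 \<Longrightarrow> \<eta> > 0 \<Longrightarrow> rho \<beta> C \<eta> > 0"
  by (simp add: rho_def r_hat_recip_pos)

lemma DERIV_rho:
  "\<eta> \<noteq> 0 \<Longrightarrow> r_hat_recip \<beta> C \<eta> \<noteq> 0 \<Longrightarrow> (rho \<beta> C has_real_derivative rho' \<beta> C \<eta>) (at \<eta>)"
  unfolding rho_def[abs_def] rho'_def
  by (auto intro!: derivative_eq_intros DERIV_r_hat_recip simp: field_simps power2_eq_square)

lemma DERIV_rho'_at_C:
  assumes "\<beta> > 0" "C > 0"
  shows "(rho' \<beta> C has_real_derivative (2 * \<beta> + 2) / (2 * \<beta> + 1)\<^sup>2) (at C)"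
proof -
  have "2 * \<beta> * C * C\<^sup>2 / C ^ 3 = 2 * \<beta>"
    using assms by (simp add: power2_eq_square power3_eq_cube)
  moreover have cancel: "x * u\<^sup>2 / u ^ 4 = x / u\<^sup>2" if "u \<noteq> 0" for x u :: real
    using that by (simp add: power4_eq_xxxx power2_eq_square)
  ultimately show ?thesis
    unfolding rho'_def[abs_def] using assms
    by (auto intro!: derivative_eq_intros DERIV_r_hat_recip DERIV_r_hat_recip'
        simp: r_hat_recip_at_C r_hat_recip'_at_C cancel)
qed

lemma rho'_at_C: "C \<noteq> 0 \<Longrightarrow> rho' \<beta> C C = 2 * C / (2 * \<beta> + 1)"
  by (simp add: rho'_def r_hat_recip_at_C r_hat_recip'_at_C power2_eq_square)

lemma r_hat_eq_inverse: "r_hat \<beta> C \<eta> = inverse (r_hat_recip \<beta> C \<eta>)"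
  by (simp add: r_hat_def r_hat_recip_def)

lemma psi_B_eq: "psi_B \<alpha> \<beta> C Kh \<eta> = \<alpha> * Kh * r_hat_recip \<beta> C \<eta>"
  by (simp add: psi_B_def r_hat_eq_inverse divide_inverse)

lemma q0_hat_eq_quad_root:
  "q0_hat \<alpha> \<beta> C A K Kh s \<eta> = quad_root (v0_hat \<alpha> A K Kh \<eta>) (A * K * s * rho \<beta> C \<eta>)"
proof -
  have "4 * A * K * r_hat \<beta> C \<eta> * \<eta>\<^sup>2 * s = 4 * (A * K * s * rho \<beta> C \<eta>)"
    unfolding rho_def r_hat_eq_inverse by (simp add: field_simps)
  then show ?thesis
    by (simp add: q0_hat_def quad_root_def diff_divide_distrib)
qed

lemma DERIV_v0_hat: "(v0_hat \<alpha> A K Kh has_real_derivative 2 * \<alpha> * A * K * \<eta>) (at \<eta>)"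
  unfolding v0_hat_def[abs_def] by (auto intro!: derivative_eq_intros)

definition g0_hat_eta :: "real \<Rightarrow> real \<Rightarrow> real \<Rightarrow> real \<Rightarrow> real \<Rightarrow> real \<Rightarrow> real \<Rightarrow> real \<Rightarrow> real" where
  "g0_hat_eta \<alpha> \<beta> C A K Kh s \<eta> =
     - ((A * K * s * rho' \<beta> C \<eta> - 2 * \<alpha> * A * K * \<eta> * q0_hat \<alpha> \<beta> C A K Kh s \<eta>)
         / (2 * q0_hat \<alpha> \<beta> C A K Kh s \<eta> + v0_hat \<alpha> A K Kh \<eta>))"

lemma f0_hat_at_fold:
  assumes "C \<noteq> 0" "2 * \<beta> + 1 \<noteq> 0"
  shows "f0_hat \<beta> C Ks (\<alpha> * Kh * (2 * \<beta> + 1)) C = Ks - \<alpha> * Kh"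
  using assms by (simp add: f0_hat_def r_hat_eq_inverse r_hat_recip_at_C)

lemma fold_point_iff_deriv:
  assumes "((\<lambda>y'. g x y') has_real_derivative d) (at y)"
  shows "fold_point g (x, y) \<longleftrightarrow> g x y = 0 \<and> d = 0"
  using assms DERIV_unique by (auto simp: fold_point_def)

context
  fixes \<alpha> \<beta> C A K Kh :: real
  assumes pos: "\<alpha> > 0" "\<beta> > 0" "C > 0" "A > 0" "K > 0" "Kh > 0"
begin

lemma discriminant_pos:
  "s > 0 \<Longrightarrow> \<eta> > 0 \<Longrightarrow> (v0_hat \<alpha> A K Kh \<eta>)\<^sup>2 + 4 * (A * K * s * rho \<beta> C \<eta>) > 0"
  using pos rho_pos[of \<beta> C \<eta>] by (intro add_nonneg_pos) auto

lemma DERIV_g0_hat_eta: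
  assumes "s > 0" "\<eta> > 0"
  shows "((\<lambda>\<eta>. g0_hat \<alpha> \<beta> C A K Kh s \<eta>) has_real_derivative g0_hat_eta \<alpha> \<beta> C A K Kh s \<eta>) (at \<eta>)"
proof -
  have "r_hat_recip \<beta> C \<eta> \<noteq> 0" using r_hat_recip_pos pos assms by force
  then have "(rho \<beta> C has_real_derivative rho' \<beta> C \<eta>) (at \<eta>)"
    using assms by (intro DERIV_rho) auto
  then have "((\<lambda>\<eta>. q0_hat \<alpha> \<beta> C A K Kh s \<eta>) has_real_derivative
               - g0_hat_eta \<alpha> \<beta> C A K Kh s \<eta>) (at \<eta>)"
    unfolding q0_hat_eq_quad_root g0_hat_eta_def minus_minus using assms
    by (intro DERIV_quad_root DERIV_v0_hat discriminant_pos derivative_eq_intros) auto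
  from DERIV_add[OF DERIV_minus[OF this] DERIV_const[of Kh]] show ?thesis
    by (simp add: g0_hat_def[abs_def])
qed

lemma eventually_DERIV_g0_hat_eta:
  assumes "s > 0" "\<eta>\<^sub>0 > 0"
  shows "\<forall>\<^sub>F \<eta> in nhds \<eta>\<^sub>0. ((\<lambda>\<eta>. g0_hat \<alpha> \<beta> C A K Kh s \<eta>)
            has_real_derivative g0_hat_eta \<alpha> \<beta> C A K Kh s \<eta>) (at \<eta>)"
  using eventually_nhds_in_open[of "{0<..}" "\<eta>\<^sub>0"] assms
  by (auto elim!: eventually_mono intro: DERIV_g0_hat_eta)

lemma DERIV_g0_hat_s:
  assumes "s > 0" "\<eta> > 0"
  shows "((\<lambda>s. g0_hat \<alpha> \<beta> C A K Kh s \<eta>) has_real_derivative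
           - A * K * rho \<beta> C \<eta> / sqrt ((v0_hat \<alpha> A K Kh \<eta>)\<^sup>2 + 4 * (A * K * s * rho \<beta> C \<eta>))) (at s)"
proof -
  have "((\<lambda>s. q0_hat \<alpha> \<beta> C A K Kh s \<eta>) has_real_derivative
           (A * K * rho \<beta> C \<eta> - 0 * q0_hat \<alpha> \<beta> C A K Kh s \<eta>)
           / sqrt ((v0_hat \<alpha> A K Kh \<eta>)\<^sup>2 + 4 * (A * K * s * rho \<beta> C \<eta>))) (at s)"
    unfolding q0_hat_eq_quad_root two_quad_root_add[symmetric] using assms
    by (intro DERIV_quad_root discriminant_pos derivative_eq_intros) auto
  from DERIV_add[OF DERIV_minus[OF this] DERIV_const[of Kh]] show ?thesis
    by (simp add: g0_hat_def[abs_def])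
qed

lemma q0_hat_on_S_B: "\<eta> > 0 \<Longrightarrow> q0_hat \<alpha> \<beta> C A K Kh (psi_B \<alpha> \<beta> C Kh \<eta>) \<eta> = Kh"
  using pos r_hat_recip_pos[of \<beta> C \<eta>]
  by (simp add: q0_hat_eq_quad_root quad_root_eq_iff psi_B_eq rho_def v0_hat_def
      power2_eq_square algebra_simps)

lemma g0_hat_on_S_B: "\<eta> > 0 \<Longrightarrow> g0_hat \<alpha> \<beta> C A K Kh (psi_B \<alpha> \<beta> C Kh \<eta>) \<eta> = 0"
  by (simp add: g0_hat_def q0_hat_on_S_B)

lemma g0_hat_eta_on_S_B:
  assumes "\<eta> > 0"
  shows "g0_hat_eta \<alpha> \<beta> C A K Kh (psi_B \<alpha> \<beta> C Kh \<eta>) \<eta> =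
    \<alpha> * A * K * Kh * \<eta>\<^sup>2 * r_hat_recip' \<beta> C \<eta> / (r_hat_recip \<beta> C \<eta> * (\<alpha> * A * K * \<eta>\<^sup>2 + Kh))"
proof -
  have "r_hat_recip \<beta> C \<eta> > 0" using r_hat_recip_pos pos assms by force
  moreover have "\<alpha> * A * K * \<eta>\<^sup>2 + Kh > 0" using pos by (intro add_nonneg_pos) auto
  ultimately show ?thesis
    using assms unfolding g0_hat_eta_def q0_hat_on_S_B[OF assms]
    by (simp add: psi_B_eq rho'_def v0_hat_def field_simps power2_eq_square)
qed

lemma fold_point_on_S_B_iff:
  assumes "\<eta> > 0"
  shows "fold_point (g0_hat \<alpha> \<beta> C A K Kh) (psi_B \<alpha> \<beta> C Kh \<eta>, \<eta>) \<longleftrightarrow> \<eta> = C"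
proof -
  have "r_hat_recip \<beta> C \<eta> > 0" using r_hat_recip_pos pos assms by force
  moreover have "\<alpha> * A * K * \<eta>\<^sup>2 + Kh > 0" using pos by (intro add_nonneg_pos) auto
  moreover have psi_pos: "psi_B \<alpha> \<beta> C Kh \<eta> > 0" using calculation(1) pos by (simp add: psi_B_eq)
  ultimately show ?thesis
    using assms pos r_hat_recip'_eq_0_iff[of \<beta> C \<eta>]
    by (simp add: fold_point_iff_deriv[of "g0_hat \<alpha> \<beta> C A K Kh", OF DERIV_g0_hat_eta[OF psi_pos assms]]
        g0_hat_on_S_B g0_hat_eta_on_S_B)
qed

lemma psi_B_at_C: "psi_B \<alpha> \<beta> C Kh C = \<alpha> * Kh * (2 * \<beta> + 1)"
  using pos by (simp add: psi_B_eq r_hat_recip_at_C)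

lemma fold_points_of_S_B:
  "{P \<in> S_B \<alpha> \<beta> C Kh. fold_point (g0_hat \<alpha> \<beta> C A K Kh) P} = {(\<alpha> * Kh * (2 * \<beta> + 1), C)}"
  using pos(3) fold_point_on_S_B_iff fold_point_on_S_B_iff[OF pos(3), unfolded psi_B_at_C]
  by (auto simp: S_B_def psi_B_at_C)

lemma DERIV_g0_hat_eta_at_fold:
  "(g0_hat_eta \<alpha> \<beta> C A K Kh (\<alpha> * Kh * (2 * \<beta> + 1)) has_real_derivative
      2 * \<alpha> * A * K * Kh * \<beta> / ((2 * \<beta> + 1) * (\<alpha> * A * K * C\<^sup>2 + Kh))) (at C)"
proof -
  define s where "s = \<alpha> * Kh * (2 * \<beta> + 1)"
  let ?a = "v0_hat \<alpha> A K Kh" and ?b = "\<lambda>\<eta>. A * K * s * rho \<beta> C \<eta>"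
  let ?q = "\<lambda>\<eta>. quad_root (?a \<eta>) (?b \<eta>)"
  have "s > 0" using pos by (simp add: s_def)
  have q_C: "?q C = Kh"
    using q0_hat_on_S_B[OF pos(3)] by (simp add: psi_B_at_C q0_hat_eq_quad_root s_def)
  have b: "((\<lambda>\<eta>. A * K * s * rho \<beta> C \<eta>) has_real_derivative A * K * s * rho' \<beta> C C) (at C)"
    using pos DERIV_rho[where \<eta> = C and \<beta> = \<beta> and C = C]
    by (auto intro!: derivative_eq_intros simp: r_hat_recip_at_C)
  have b': "((\<lambda>\<eta>. A * K * s * rho' \<beta> C \<eta>) has_real_derivative
              A * K * s * ((2 * \<beta> + 2) / (2 * \<beta> + 1)\<^sup>2)) (at C)"
    using DERIV_rho'_at_C[of \<beta> C] pos by (auto intro!: derivative_eq_intros)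
  have a': "((\<lambda>\<eta>. 2 * \<alpha> * A * K * \<eta>) has_real_derivative 2 * \<alpha> * A * K) (at C)"
    by (auto intro!: derivative_eq_intros)
  have critical: "A * K * s * rho' \<beta> C C = 2 * \<alpha> * A * K * C * ?q C"
    unfolding q_C using pos by (simp add: rho'_at_C s_def)
  have "((\<lambda>\<eta>. (A * K * s * rho' \<beta> C \<eta> - 2 * \<alpha> * A * K * \<eta> * ?q \<eta>) / (2 * ?q \<eta> + ?a \<eta>))
          has_real_derivative (A * K * s * ((2 * \<beta> + 2) / (2 * \<beta> + 1)\<^sup>2) - 2 * \<alpha> * A * K * ?q C)
                               / (2 * ?q C + ?a C)) (at C)"
    using DERIV_quad_root_deriv_at_critical[where a' = "\<lambda>\<eta>. 2 * \<alpha> * A * K * \<eta>"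
        and b' = "\<lambda>\<eta>. A * K * s * rho' \<beta> C \<eta>", OF DERIV_v0_hat b a' b'
        discriminant_pos[OF \<open>s > 0\<close> pos(3)] critical] .
  then have derivative: "(g0_hat_eta \<alpha> \<beta> C A K Kh s has_real_derivative
      - ((A * K * s * ((2 * \<beta> + 2) / (2 * \<beta> + 1)\<^sup>2) - 2 * \<alpha> * A * K * Kh) / (2 * Kh + ?a C))) (at C)"
    unfolding g0_hat_eta_def[abs_def] q0_hat_eq_quad_root q_C by (rule DERIV_minus)
  have slope: "A * K * s * ((2 * \<beta> + 2) / (2 * \<beta> + 1)\<^sup>2)
                = \<alpha> * A * K * Kh * (2 * \<beta> + 2) / (2 * \<beta> + 1)"
    using pos by (simp add: s_def power2_eq_square)
  have denominator: "2 * Kh + ?a C = \<alpha> * A * K * C\<^sup>2 + Kh"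
    by (simp add: v0_hat_def)
  have "\<alpha> * A * K * C\<^sup>2 + Kh \<noteq> 0" "2 * \<beta> + 1 \<noteq> 0"
    using pos add_nonneg_pos[of "\<alpha> * A * K * C\<^sup>2" Kh] by auto
  then have "- ((A * K * s * ((2 * \<beta> + 2) / (2 * \<beta> + 1)\<^sup>2) - 2 * \<alpha> * A * K * Kh) / (2 * Kh + ?a C))
      = 2 * \<alpha> * A * K * Kh * \<beta> / ((2 * \<beta> + 1) * (\<alpha> * A * K * C\<^sup>2 + Kh))"
    unfolding slope denominator by (simp add: field_simps)
  with derivative show ?thesis
    unfolding s_def by simp
qed

end

theorem proposition4:
  fixes \<alpha> \<beta> C A K Kh Ks :: real
  assumes "\<alpha> > 0" "\<beta> > 0" "C > 0" "A > 0" "K > 0" "Kh > 0" "Ks > 0"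
    and "\<alpha> * Kh > Ks"
  shows "{P \<in> S_B \<alpha> \<beta> C Kh. fold_point (g0_hat \<alpha> \<beta> C A K Kh) P}
           = {(\<alpha> * Kh * (2 * \<beta> + 1), C)}
       \<and> generic_fold_point (f0_hat \<beta> C Ks) (g0_hat \<alpha> \<beta> C A K Kh)
           (\<alpha> * Kh * (2 * \<beta> + 1), C)"
proof -
  let ?sB = "\<alpha> * Kh * (2 * \<beta> + 1)"
  have "?sB > 0" using assms by simp
  have "\<alpha> * A * K * C\<^sup>2 + Kh > 0" using assms by (intro add_nonneg_pos) auto
  then have curvature: "2 * \<alpha> * A * K * Kh * \<beta> / ((2 * \<beta> + 1) * (\<alpha> * A * K * C\<^sup>2 + Kh)) \<noteq> 0"
    using assms by simp
  have slow:
    "- A * K * rho \<beta> C C / sqrt ((v0_hat \<alpha> A K Kh C)\<^sup>2 + 4 * (A * K * ?sB * rho \<beta> C C)) \<noteq> 0"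
    using assms rho_pos[of \<beta> C C] discriminant_pos[OF assms(1-6) \<open>?sB > 0\<close> assms(3)] by simp
  have transversal: "f0_hat \<beta> C Ks ?sB C \<noteq> 0"
    using assms by (simp add: f0_hat_at_fold)
  have "fold_point (g0_hat \<alpha> \<beta> C A K Kh) (?sB, C)"
    using fold_points_of_S_B[OF assms(1-6)] by blast
  then show ?thesis
    unfolding generic_fold_point_def prod.case
    using fold_points_of_S_B[OF assms(1-6)] curvature slow
      eventually_DERIV_g0_hat_eta[OF assms(1-6) \<open>?sB > 0\<close> assms(3)]
      DERIV_g0_hat_eta_at_fold[OF assms(1-6)] DERIV_g0_hat_s[OF assms(1-6) \<open>?sB > 0\<close> assms(3)]
      transversal
    by blast
qed

end
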